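(* Let $x\in\mathbb{R}^d$, $d\ge1$, and run the following procedure. Compute $(\theta,p)=\mathrm{csa}_{\text{even}}(x)$. If $\theta^\top\Pi_{[0,1]^d}(x)\le p$, stop. Otherwise set $R:=\{1,\dots,d\}$, $q:=p$ and repeat the following loop: if $|R|=1$, stop; compute $v_R := x_R - \frac{\theta_R^\top x_R - q}{|R|}\theta_R$; let $S := \{j\in R : (v_j>1 \text{ and } \theta_j=1) \text{ or } (v_j<0\text{ and }\theta_j=-1)\}$; if $S=\emptyset$, stop; otherwise replace $q$ by $q - |\{j\in S:\theta_j=1\}|$ and $R$ by $R\setminus S$, and repeat. Then at the beginning of every execution of the loop, $\theta_R^\top \Pi_{[0,1]^{R}}(x_R) > q$ holds (i.e. the check $\theta^\top\Pi_{[0,1]}(\cdot)\le p$ is never satisfied in the recursive part and is only needed at the start).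
   Context: For $R\subseteq\{1,\dots,d\}$ and $u\in\mathbb{R}^d$, $u_R$ denotes the subvector $(u_j)_{j\in R}$; $\Pi_{[0,1]^R}$ is componentwise clipping to $[0,1]$. $\mathrm{csa}_{\text{even}}(x)$: set $\theta_j=1$ if $x_j>1/2$ and $\theta_j=-1$ otherwise; if $|\{j:\theta_j=1\}|$ is even, choose $j^*\in\arg\min_j|x_j-1/2|$ and replace $\theta_{j^*}$ by $-\theta_{j^*}$; set $p=|\{j:\theta_j=1\}|-1$; output $(\theta,p)$. *)

theory Defs
  imports Complex_Main
begin

text \<open>Coordinates are indexed by 1..d; vectors are functions nat => real.\<close>

definition clip01 :: "real \<Rightarrow> real" where
  "clip01 t = max 0 (min 1 t)"

definition theta0 :: "(nat \<Rightarrow> real) \<Rightarrow> nat \<Rightarrow> real" where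
  "theta0 x j = (if x j > 1/2 then 1 else -1)"

text \<open>csa_even, parametrised by the chosen minimiser jstar of |x_j - 1/2|.\<close>
definition csa_theta :: "(nat \<Rightarrow> real) \<Rightarrow> nat \<Rightarrow> nat \<Rightarrow> nat \<Rightarrow> real" where
  "csa_theta x d jstar =
     (if even (card {j\<in>{1..d}. theta0 x j = 1})
      then (theta0 x)(jstar := - theta0 x jstar) else theta0 x)"

definition csa_p :: "(nat \<Rightarrow> real) \<Rightarrow> nat \<Rightarrow> nat \<Rightarrow> real" where
  "csa_p x d jstar = real (card {j\<in>{1..d}. csa_theta x d jstar j = 1}) - 1"

definition loop_v :: "(nat \<Rightarrow> real) \<Rightarrow> (nat \<Rightarrow> real) \<Rightarrow> nat set \<times> real \<Rightarrow> nat \<Rightarrow> real" where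
  "loop_v x \<theta> Rq j =
     x j - ((\<Sum>i\<in>fst Rq. \<theta> i * x i) - snd Rq) / real (card (fst Rq)) * \<theta> j"

definition loop_S :: "(nat \<Rightarrow> real) \<Rightarrow> (nat \<Rightarrow> real) \<Rightarrow> nat set \<times> real \<Rightarrow> nat set" where
  "loop_S x \<theta> Rq = {j\<in>fst Rq. (loop_v x \<theta> Rq j > 1 \<and> \<theta> j = 1) \<or> (loop_v x \<theta> Rq j < 0 \<and> \<theta> j = -1)}"

definition loop_step :: "(nat \<Rightarrow> real) \<Rightarrow> (nat \<Rightarrow> real) \<Rightarrow> nat set \<times> real \<Rightarrow> nat set \<times> real" where
  "loop_step x \<theta> Rq =
     (fst Rq - loop_S x \<theta> Rq, snd Rq - real (card {j\<in>loop_S x \<theta> Rq. \<theta> j = 1}))"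

end

theory Submission
  imports Defs
begin

text \<open>Each coordinate removed in a loop step satisfies \<open>\<theta>\<^sub>j = 1\<close> or \<open>\<theta>\<^sub>j = -1\<close>, and its clipped
  value lies in \<open>[0,1]\<close>; so removing \<open>S\<close> lowers \<open>\<theta>\<^sub>R\<^sup>T \<Pi>(x\<^sub>R)\<close> by at most
  \<open>|{j\<in>S. \<theta>\<^sub>j = 1}|\<close>, which is exactly how much \<open>q\<close> drops. Hence the strict inequality
  \<open>\<theta>\<^sub>R\<^sup>T \<Pi>(x\<^sub>R) > q\<close> is invariant under every loop step, whatever \<open>\<theta>\<close> and \<open>q\<close> are and
  whether or not the stopping rules fire.\<close>

lemma clip01_bounds: "0 \<le> clip01 t" "clip01 t \<le> 1"
  by (simp_all add: clip01_def)

lemma sum_sign_clip01_le_card: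
  fixes \<theta> y :: "nat \<Rightarrow> real"
  assumes "finite S" and "\<forall>j\<in>S. \<theta> j = 1 \<or> \<theta> j = -1"
  shows "(\<Sum>j\<in>S. \<theta> j * clip01 (y j)) \<le> real (card {j\<in>S. \<theta> j = 1})"
proof -
  have "(\<Sum>j\<in>S. \<theta> j * clip01 (y j)) \<le> (\<Sum>j\<in>S. if \<theta> j = 1 then 1 else 0)"
    using assms(2) by (intro sum_mono) (auto simp: clip01_bounds)
  also have "\<dots> = real (card {j\<in>S. \<theta> j = 1})"
    using assms(1) by (simp add: sum.inter_filter[symmetric])
  finally show ?thesis .
qed

lemma loop_S_subset: "loop_S x \<theta> Rq \<subseteq> fst Rq"
  by (auto simp: loop_S_def)

lemma loop_S_signs: "\<forall>j\<in>loop_S x \<theta> Rq. \<theta> j = 1 \<or> \<theta> j = -1"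
  by (auto simp: loop_S_def)

lemma fst_funpow_loop_step_subset: "fst ((loop_step x \<theta> ^^ n) Rq) \<subseteq> fst Rq"
  by (induction n) (auto simp: loop_step_def)

lemma loop_step_preserves_gap:
  fixes \<theta> x :: "nat \<Rightarrow> real"
  assumes fin: "finite (fst Rq)"
    and gap: "(\<Sum>j\<in>fst Rq. \<theta> j * clip01 (x j)) > snd Rq"
  shows "(\<Sum>j\<in>fst (loop_step x \<theta> Rq). \<theta> j * clip01 (x j)) > snd (loop_step x \<theta> Rq)"
proof -
  define S where "S = loop_S x \<theta> Rq"
  have "S \<subseteq> fst Rq"
    unfolding S_def by (rule loop_S_subset)
  then have split: "(\<Sum>j\<in>fst Rq. \<theta> j * clip01 (x j))
      = (\<Sum>j\<in>fst Rq - S. \<theta> j * clip01 (x j)) + (\<Sum>j\<in>S. \<theta> j * clip01 (x j))"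
    using sum.subset_diff fin by blast
  have "(\<Sum>j\<in>S. \<theta> j * clip01 (x j)) \<le> real (card {j\<in>S. \<theta> j = 1})"
    using \<open>S \<subseteq> fst Rq\<close> fin loop_S_signs unfolding S_def
    by (intro sum_sign_clip01_le_card) (auto intro: finite_subset)
  with gap split show ?thesis
    by (simp add: loop_step_def S_def[symmetric])
qed

lemma funpow_loop_step_preserves_gap:
  fixes \<theta> x :: "nat \<Rightarrow> real"
  assumes "finite (fst Rq)"
    and "(\<Sum>j\<in>fst Rq. \<theta> j * clip01 (x j)) > snd Rq"
  shows "(\<Sum>j\<in>fst ((loop_step x \<theta> ^^ n) Rq). \<theta> j * clip01 (x j)) > snd ((loop_step x \<theta> ^^ n) Rq)"
proof (induction n)
  case 0
  then show ?case using assms(2) by simp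
next
  case (Suc n)
  have "finite (fst ((loop_step x \<theta> ^^ n) Rq))"
    using fst_funpow_loop_step_subset assms(1) by (rule finite_subset)
  with Suc.IH show ?case
    by (simp add: loop_step_preserves_gap)
qed

theorem theorem7:
  fixes x :: "nat \<Rightarrow> real" and d jstar k :: nat
  assumes "d \<ge> 1"
    and "jstar \<in> {1..d}"
    and "\<forall>j\<in>{1..d}. \<bar>x jstar - 1/2\<bar> \<le> \<bar>x j - 1/2\<bar>"
    and "\<not> ((\<Sum>j\<in>{1..d}. csa_theta x d jstar j * clip01 (x j)) \<le> csa_p x d jstar)"
    and "\<forall>i<k. card (fst ((loop_step x (csa_theta x d jstar) ^^ i) ({1..d}, csa_p x d jstar))) \<noteq> 1
             \<and> loop_S x (csa_theta x d jstar)
                 ((loop_step x (csa_theta x d jstar) ^^ i) ({1..d}, csa_p x d jstar)) \<noteq> {}"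
  shows "(\<Sum>j\<in>fst ((loop_step x (csa_theta x d jstar) ^^ k) ({1..d}, csa_p x d jstar)).
            csa_theta x d jstar j * clip01 (x j))
         > snd ((loop_step x (csa_theta x d jstar) ^^ k) ({1..d}, csa_p x d jstar))"
  using assms(4) by (intro funpow_loop_step_preserves_gap) auto

end
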